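(* Let $d,n\ge1$ and $\Lambda=\mathrm{diag}(\lambda_1,\dots,\lambda_d)$ a diagonal covariance matrix. Let $x^{(1)},\dots,x^{(n)}\in\mathbb{R}^d$ be i.i.d. $\mathcal{N}(0,\Lambda)$, $w_\star\sim\mathcal{N}(0,I_d)$ independent, $y^{(i)}=\langle w_\star,x^{(i)}\rangle$, $z^{(i)}=\begin{bmatrix}x^{(i)}\\ y^{(i)}\end{bmatrix}\in\mathbb{R}^{d+1}$, and $C=\frac1n\sum_{i=1}^n z^{(i)}{z^{(i)}}^\top$. Fix $j\in\{1,\dots,d\}$ and for $X\in\mathbb{R}^{(d+1)\times(d+1)}$ define $$f_j(X)=\mathbb{E}\big[(\langle C,X\rangle+w_\star[j])^2\big],\qquad \langle C,X\rangle=\mathrm{tr}(CX^\top).$$ Then a global minimum of $f_j$ is $$X_j=-\frac{1}{\frac{n+1}{n}\lambda_j+\frac1n\sum_{k=1}^d\lambda_k}\,E_{d+1,j},$$ where $E_{d+1,j}$ is the matrix whose $(d+1,j)$ entry is $1$ and all other entries are $0$.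
   Context: $w_\star[j]$ denotes the $j$-th coordinate of $w_\star$. *)

theory Defs
  imports "HOL-Probability.Probability"
begin

definition gauss :: "real \<Rightarrow> real measure" where
  "gauss v = (if v = 0 then return borel 0
              else density lborel (normal_density 0 (sqrt v)))"

text \<open>Indices are 0-based: data coordinates k < d, samples i < n; the augmented
  vector z has coordinates 0..d, coordinate d being the label y.\<close>

definition label :: "nat \<Rightarrow> (nat \<Rightarrow> nat \<Rightarrow> 'a \<Rightarrow> real) \<Rightarrow> (nat \<Rightarrow> 'a \<Rightarrow> real) \<Rightarrow> nat \<Rightarrow> 'a \<Rightarrow> real" where
  "label d x w i \<omega> = (\<Sum>k<d. w k \<omega> * x i k \<omega>)"

definition zvec :: "nat \<Rightarrow> (nat \<Rightarrow> nat \<Rightarrow> 'a \<Rightarrow> real) \<Rightarrow> (nat \<Rightarrow> 'a \<Rightarrow> real) \<Rightarrow> nat \<Rightarrow> 'a \<Rightarrow> nat \<Rightarrow> real" where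
  "zvec d x w i \<omega> a = (if a < d then x i a \<omega> else label d x w i \<omega>)"

definition Cmat :: "nat \<Rightarrow> nat \<Rightarrow> (nat \<Rightarrow> nat \<Rightarrow> 'a \<Rightarrow> real) \<Rightarrow> (nat \<Rightarrow> 'a \<Rightarrow> real) \<Rightarrow> 'a \<Rightarrow> nat \<Rightarrow> nat \<Rightarrow> real" where
  "Cmat d n x w \<omega> a b = (1 / real n) * (\<Sum>i<n. zvec d x w i \<omega> a * zvec d x w i \<omega> b)"

definition frob :: "nat \<Rightarrow> (nat \<Rightarrow> nat \<Rightarrow> real) \<Rightarrow> (nat \<Rightarrow> nat \<Rightarrow> real) \<Rightarrow> real" where
  "frob d A B = (\<Sum>a\<le>d. \<Sum>b\<le>d. A a b * B a b)"

definition fj :: "'a measure \<Rightarrow> nat \<Rightarrow> nat \<Rightarrow> (nat \<Rightarrow> nat \<Rightarrow> 'a \<Rightarrow> real) \<Rightarrow> (nat \<Rightarrow> 'a \<Rightarrow> real) \<Rightarrow> nat \<Rightarrow> (nat \<Rightarrow> nat \<Rightarrow> real) \<Rightarrow> real" where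
  "fj M d n x w j X = (\<integral>\<omega>. (frob d (Cmat d n x w \<omega>) X + w j \<omega>)\<^sup>2 \<partial>M)"

definition Emat :: "nat \<Rightarrow> nat \<Rightarrow> nat \<Rightarrow> nat \<Rightarrow> real" where
  "Emat a b = (\<lambda>r c. if r = a \<and> c = b then 1 else 0)"

end

theory Submission
  imports Defs
begin

(*
  f_j is a convex quadratic in X, so X is a minimiser as soon as the residual
  <C, X> + w_j is L2-orthogonal to every entry C_ab (the normal equations).  For
  X = -kappa E_{d+1,j} the residual is w_j - kappa C_{d+1,j}.

  All moments involved are expectations of polynomials in the independent centred
  Gaussians x_ik and w_k, and a monomial of odd total degree in some set S of these
  variables has expectation zero.  Taking S to be all weights w, or all variables
  w_c, x_1c, ..., x_nc of one coordinate c, shows that E[w_j C_ab] and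
  E[C_{d+1,j} C_ab] vanish unless {a, b} = {j, d+1}.  The two remaining moments are
  E[w_j C_{d+1,j}] = lambda_j and E[C_{d+1,j}^2] = lambda_j ((n+1) lambda_j + sum_k lambda_k) / n,
  and kappa is exactly their ratio.
*)

lemma integrable_power_gauss:
  assumes "s \<ge> 0"
  shows "integrable (gauss s) (\<lambda>t. t ^ k)"
proof (cases "s = 0")
  case True
  interpret prob_space "return borel (0::real)" by (rule prob_space_return) simp
  show ?thesis
    using True by (simp add: gauss_def) (rule integrable_cong_AE_imp, auto simp: AE_return)
next
  case False
  then have "sqrt s > 0" using assms by simp
  then show ?thesis
    using False by (simp add: gauss_def integrable_density integrable_normal_moment[of "sqrt s" 0 k, simplified])
qed

lemma integral_odd_power_gauss:
  assumes "s \<ge> 0" "odd k"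
  shows "(\<integral>t. t ^ k \<partial>gauss s) = 0"
proof (cases "s = 0")
  case True
  then show ?thesis using assms by (simp add: gauss_def integral_return) (cases k, auto)
next
  case False
  then have "sqrt s > 0" using assms by simp
  moreover obtain m where "k = 2 * m + 1" using assms oddE by blast
  ultimately show ?thesis
    using False by (simp add: gauss_def integral_density integral_normal_moment_odd[of "sqrt s" 0 m, simplified])
qed

lemma integral_even_power_gauss:
  assumes "s \<ge> 0"
  shows "(\<integral>t. t ^ (2 * m) \<partial>gauss s) = fact (2 * m) / ((2 / s) ^ m * fact m)"
proof (cases "s = 0")
  case True
  then show ?thesis by (simp add: gauss_def power_0_left integral_return)
next
  case False
  then have "sqrt s > 0" using assms by simp
  then show ?thesis
    using False assms by (simp add: gauss_def integral_density integral_normal_moment_even[of "sqrt s" 0 m, simplified])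
qed

lemma integral_power2_gauss: "s \<ge> 0 \<Longrightarrow> (\<integral>t. t ^ 2 \<partial>gauss s) = s"
  using integral_even_power_gauss[of s 1] by (cases "s = 0") auto

lemma integral_power4_gauss: "s \<ge> 0 \<Longrightarrow> (\<integral>t. t ^ 4 \<partial>gauss s) = 3 * s\<^sup>2"
  using integral_even_power_gauss[of s 2]
  by (cases "s = 0") (auto simp: fact_numeral power2_eq_square field_simps)

lemma (in prob_space)
  assumes "random_variable borel X" "distr M borel X = gauss s" "s \<ge> 0"
  shows integrable_power_gauss_distributed: "integrable M (\<lambda>\<omega>. X \<omega> ^ k)"
    and expectation_power_gauss_distributed: "expectation (\<lambda>\<omega>. X \<omega> ^ k) = (\<integral>t. t ^ k \<partial>gauss s)"
proof -
  show "integrable M (\<lambda>\<omega>. X \<omega> ^ k)"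
    using integrable_power_gauss[OF assms(3), of k] integrable_distr_eq[OF assms(1), of "\<lambda>t. t ^ k"]
      assms(2) by simp
  show "expectation (\<lambda>\<omega>. X \<omega> ^ k) = (\<integral>t. t ^ k \<partial>gauss s)"
    using integral_distr[OF assms(1), of "\<lambda>t. t ^ k"] assms(2) by simp
qed

lemma (in prob_space) expectation_square_le_add_orthogonal:
  fixes r D :: "'a \<Rightarrow> real"
  assumes "integrable M (\<lambda>\<omega>. (r \<omega>)\<^sup>2)" "integrable M (\<lambda>\<omega>. r \<omega> * D \<omega>)"
    and "integrable M (\<lambda>\<omega>. (D \<omega>)\<^sup>2)" and "expectation (\<lambda>\<omega>. r \<omega> * D \<omega>) = 0"
  shows "expectation (\<lambda>\<omega>. (r \<omega>)\<^sup>2) \<le> expectation (\<lambda>\<omega>. (r \<omega> + D \<omega>)\<^sup>2)"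
proof -
  have "expectation (\<lambda>\<omega>. (r \<omega> + D \<omega>)\<^sup>2)
      = expectation (\<lambda>\<omega>. (r \<omega>)\<^sup>2) + 2 * expectation (\<lambda>\<omega>. r \<omega> * D \<omega>) + expectation (\<lambda>\<omega>. (D \<omega>)\<^sup>2)"
    using assms(1-3) by (simp add: power2_sum mult.assoc)
  moreover have "expectation (\<lambda>\<omega>. (D \<omega>)\<^sup>2) \<ge> 0" by simp
  ultimately show ?thesis using assms(4) by simp
qed

lemma frob_diff_right: "frob d A (\<lambda>a b. X a b - Y a b) = frob d A X - frob d A Y"
  by (simp add: frob_def right_diff_distrib sum_subtractf)

lemma frob_scaled_Emat:
  assumes "a \<le> d" "b \<le> d"
  shows "frob d A (\<lambda>r c. t * Emat a b r c) = t * A a b"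
proof -
  have "A r c * (t * Emat a b r c) = (if c = b then if r = a then t * A a b else 0 else 0)" for r c
    by (simp add: Emat_def)
  then show ?thesis
    using assms by (simp add: frob_def)
qed

lemma sum_lessThan_if_eq:
  fixes A B :: real
  assumes "i < N"
  shows "(\<Sum>i'<N. if i = i' then A else B) = A + (real N - 1) * B"
proof -
  have "(\<Sum>i'<N. if i = i' then A else B) = (\<Sum>i'<N. B + (if i = i' then A - B else 0))"
    by (rule sum.cong) auto
  also have "\<dots> = real N * B + (A - B)"
    using assms by (simp add: sum.distrib)
  finally show ?thesis
    by (simp add: algebra_simps)
qed

locale indep_vars_vanishing_odd_moments = prob_space +
  fixes I :: "'i set" and V :: "'i \<Rightarrow> 'a \<Rightarrow> real"
  assumes finite_index: "finite I"
    and indep: "indep_vars (\<lambda>_. borel) V I"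
    and integrable_power: "v \<in> I \<Longrightarrow> integrable M (\<lambda>\<omega>. V v \<omega> ^ k)"
    and odd_moment_eq_0: "v \<in> I \<Longrightarrow> odd k \<Longrightarrow> expectation (\<lambda>\<omega>. V v \<omega> ^ k) = 0"
begin

lemma
  assumes "F \<subseteq> I"
  shows integrable_prod_power: "integrable M (\<lambda>\<omega>. \<Prod>v\<in>F. V v \<omega> ^ k v)"
    and expectation_prod_power:
      "expectation (\<lambda>\<omega>. \<Prod>v\<in>F. V v \<omega> ^ k v) = (\<Prod>v\<in>F. expectation (\<lambda>\<omega>. V v \<omega> ^ k v))"
proof -
  have "indep_vars (\<lambda>_. borel) (\<lambda>v \<omega>. V v \<omega> ^ k v) I"
    using indep_vars_compose2[OF indep, of "\<lambda>v t. t ^ k v" "\<lambda>_. borel"] by simp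
  then have "indep_vars (\<lambda>_. borel) (\<lambda>v \<omega>. V v \<omega> ^ k v) F"
    using assms by (rule indep_vars_subset)
  moreover have "finite F" using assms finite_index by (rule finite_subset)
  moreover have "v \<in> F \<Longrightarrow> integrable M (\<lambda>\<omega>. V v \<omega> ^ k v)" for v
    using assms integrable_power by blast
  ultimately show "integrable M (\<lambda>\<omega>. \<Prod>v\<in>F. V v \<omega> ^ k v)"
    and "expectation (\<lambda>\<omega>. \<Prod>v\<in>F. V v \<omega> ^ k v) = (\<Prod>v\<in>F. expectation (\<lambda>\<omega>. V v \<omega> ^ k v))"
    by (simp_all add: indep_vars_integrable indep_vars_lebesgue_integral)
qed

definition monomial :: "('i \<Rightarrow> nat) \<Rightarrow> 'a \<Rightarrow> real" where
  "monomial e \<omega> = (\<Prod>v\<in>I. V v \<omega> ^ e v)"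

lemma integrable_monomial: "integrable M (monomial e)"
  unfolding monomial_def by (rule integrable_prod_power) simp

lemma monomial_add: "monomial (\<lambda>v. e1 v + e2 v) \<omega> = monomial e1 \<omega> * monomial e2 \<omega>"
  by (simp add: monomial_def power_add prod.distrib)

lemma expectation_monomial_odd_eq_0:
  assumes "S \<subseteq> I" "odd (\<Sum>v\<in>S. e v)"
  shows "expectation (monomial e) = 0"
proof -
  obtain v where v: "v \<in> S" "odd (e v)"
    using assms(2) by (metis dvd_sum)
  then have "expectation (\<lambda>\<omega>. V v \<omega> ^ e v) = 0"
    using assms(1) odd_moment_eq_0 by blast
  then show ?thesis
    using v assms(1) finite_index unfolding monomial_def expectation_prod_power[OF order_refl]
    by (intro prod_zero) auto
qed

definition poly_eval :: "(real \<times> ('i \<Rightarrow> nat)) list \<Rightarrow> 'a \<Rightarrow> real" where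
  "poly_eval L \<omega> = (\<Sum>(c, e)\<leftarrow>L. c * monomial e \<omega>)"

lemma poly_eval_Nil: "poly_eval [] = (\<lambda>_. 0)"
  by (simp add: fun_eq_iff poly_eval_def)

lemma poly_eval_Cons: "poly_eval ((c, e) # L) = (\<lambda>\<omega>. c * monomial e \<omega> + poly_eval L \<omega>)"
  by (simp add: fun_eq_iff poly_eval_def)

lemma poly_eval_mult:
  "poly_eval (concat (map (\<lambda>(c1, e1). map (\<lambda>(c2, e2). (c1 * c2, \<lambda>v. e1 v + e2 v)) L2) L1)) \<omega>
    = poly_eval L1 \<omega> * poly_eval L2 \<omega>"
proof (induction L1)
  case (Cons a L1)
  obtain c1 e1 where "a = (c1, e1)" by force
  moreover have "poly_eval (map (\<lambda>(c2, e2). (c1 * c2, \<lambda>v. e1 v + e2 v)) L2) \<omega>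
      = c1 * monomial e1 \<omega> * poly_eval L2 \<omega>"
    by (induction L2) (auto simp: poly_eval_def monomial_add algebra_simps)
  ultimately show ?case
    using Cons by (simp add: poly_eval_def algebra_simps)
qed (simp add: poly_eval_def)

lemma integrable_poly_eval: "integrable M (poly_eval L)"
proof (induction L)
  case (Cons a L)
  then show ?case by (cases a) (simp add: poly_eval_Cons integrable_monomial)
qed (simp add: poly_eval_Nil)

definition parity_poly :: "'i set \<Rightarrow> bool \<Rightarrow> ('a \<Rightarrow> real) \<Rightarrow> bool" where
  "parity_poly S p f \<longleftrightarrow> (\<exists>L. f = poly_eval L \<and> (\<forall>(c, e)\<in>set L. odd (\<Sum>v\<in>S. e v) = p))"

(* For S = {} the parity condition is vacuous. *)
abbreviation polynomial :: "('a \<Rightarrow> real) \<Rightarrow> bool" where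
  "polynomial \<equiv> parity_poly {} False"

lemma parity_poly_const: "parity_poly S False (\<lambda>_. c)"
  unfolding parity_poly_def
  by (rule exI[of _ "[(c, \<lambda>_. 0)]"]) (simp add: fun_eq_iff poly_eval_def monomial_def)

lemma parity_poly_var:
  assumes "finite S" "v \<in> I"
  shows "parity_poly S (v \<in> S) (V v)"
proof -
  have "V v = poly_eval [(1, \<lambda>u. if u = v then 1 else 0)]"
    using assms finite_index
    by (simp add: fun_eq_iff poly_eval_def monomial_def if_distrib[of "\<lambda>k. V _ _ ^ k"] prod.delta
        cong: if_cong)
  moreover have "odd (\<Sum>u\<in>S. if u = v then 1 else 0 :: nat) = (v \<in> S)"
    using assms by (simp add: sum.delta)
  ultimately show ?thesis
    unfolding parity_poly_def by (intro exI[of _ "[(1, \<lambda>u. if u = v then 1 else 0)]"]) simp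
qed

lemma parity_poly_add:
  assumes "parity_poly S p f" "parity_poly S p g"
  shows "parity_poly S p (\<lambda>\<omega>. f \<omega> + g \<omega>)"
proof -
  obtain L1 L2 where "f = poly_eval L1" "\<forall>(c, e)\<in>set L1. odd (\<Sum>v\<in>S. e v) = p"
    and "g = poly_eval L2" "\<forall>(c, e)\<in>set L2. odd (\<Sum>v\<in>S. e v) = p"
    using assms unfolding parity_poly_def by blast
  then show ?thesis
    unfolding parity_poly_def by (intro exI[of _ "L1 @ L2"]) (auto simp: poly_eval_def)
qed

lemma parity_poly_mult:
  assumes "parity_poly S p f" "parity_poly S q g"
  shows "parity_poly S (p \<noteq> q) (\<lambda>\<omega>. f \<omega> * g \<omega>)"
proof -
  obtain L1 L2 where L1: "f = poly_eval L1" "\<forall>(c, e)\<in>set L1. odd (\<Sum>v\<in>S. e v) = p"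
    and L2: "g = poly_eval L2" "\<forall>(c, e)\<in>set L2. odd (\<Sum>v\<in>S. e v) = q"
    using assms unfolding parity_poly_def by blast
  let ?L = "concat (map (\<lambda>(c1, e1). map (\<lambda>(c2, e2). (c1 * c2, \<lambda>v. e1 v + e2 v)) L2) L1)"
  have "(\<lambda>\<omega>. f \<omega> * g \<omega>) = poly_eval ?L"
    using L1(1) L2(1) by (simp add: fun_eq_iff poly_eval_mult)
  moreover have "odd (\<Sum>v\<in>S. e v) = (p \<noteq> q)" if "(c, e) \<in> set ?L" for c e
    using that L1(2) L2(2) by (fastforce simp: sum.distrib)
  ultimately show ?thesis
    unfolding parity_poly_def by blast
qed

lemma parity_poly_mult_eq:
  "parity_poly S p f \<Longrightarrow> parity_poly S q g \<Longrightarrow> r = (p \<noteq> q) \<Longrightarrow> parity_poly S r (\<lambda>\<omega>. f \<omega> * g \<omega>)"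
  using parity_poly_mult by blast

lemma parity_poly_diff:
  assumes "parity_poly S p f" "parity_poly S p g"
  shows "parity_poly S p (\<lambda>\<omega>. f \<omega> - g \<omega>)"
proof -
  have "parity_poly S p (\<lambda>\<omega>. - 1 * g \<omega>)"
    using parity_poly_mult[OF parity_poly_const[of S "-1"] assms(2)] by simp
  from parity_poly_add[OF assms(1) this] show ?thesis
    by simp
qed

lemma parity_poly_sum:
  assumes "finite A" "\<And>i. i \<in> A \<Longrightarrow> parity_poly S p (f i)"
  shows "parity_poly S p (\<lambda>\<omega>. \<Sum>i\<in>A. f i \<omega>)"
  using assms
proof (induction A rule: finite_induct)
  case empty
  show ?case unfolding parity_poly_def by (intro exI[of _ "[]"]) (simp add: poly_eval_Nil)
qed (auto intro: parity_poly_add)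

lemma integrable_parity_poly: "parity_poly S p f \<Longrightarrow> integrable M f"
  unfolding parity_poly_def using integrable_poly_eval by blast

lemma expectation_odd_parity_poly_eq_0:
  assumes "parity_poly S True f" "S \<subseteq> I"
  shows "expectation f = 0"
proof -
  obtain L where "f = poly_eval L" "\<forall>(c, e)\<in>set L. odd (\<Sum>v\<in>S. e v)"
    using assms(1) unfolding parity_poly_def by auto
  then show ?thesis
  proof (induction L arbitrary: f)
    case (Cons a L)
    obtain c e where a: "a = (c, e)" by force
    have "expectation (poly_eval (a # L)) = c * expectation (monomial e) + expectation (poly_eval L)"
      by (simp add: a poly_eval_Cons integrable_monomial integrable_poly_eval)
    then show ?case
      using Cons expectation_monomial_odd_eq_0[OF assms(2), of e] by (simp add: a)
  qed (simp add: poly_eval_Nil)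
qed

lemma polynomial_mult: "polynomial f \<Longrightarrow> polynomial g \<Longrightarrow> polynomial (\<lambda>\<omega>. f \<omega> * g \<omega>)"
  using parity_poly_mult[of "{}" False f False g] by simp

lemma polynomial_sum:
  "finite A \<Longrightarrow> (\<And>i. i \<in> A \<Longrightarrow> polynomial (f i)) \<Longrightarrow> polynomial (\<lambda>\<omega>. \<Sum>i\<in>A. f i \<omega>)"
  by (rule parity_poly_sum)

lemma integrable_polynomial: "polynomial f \<Longrightarrow> integrable M f"
  by (rule integrable_parity_poly)

lemma expectation_sum_polynomial:
  "(\<And>i. i \<in> A \<Longrightarrow> polynomial (f i)) \<Longrightarrow> expectation (\<lambda>\<omega>. \<Sum>i\<in>A. f i \<omega>) = (\<Sum>i\<in>A. expectation (f i))"
  by (rule Bochner_Integration.integral_sum) (rule integrable_parity_poly)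

lemma expectation_double_sum_polynomial:
  assumes "finite B" "\<And>a b. a \<in> A \<Longrightarrow> b \<in> B \<Longrightarrow> polynomial (f a b)"
  shows "expectation (\<lambda>\<omega>. \<Sum>a\<in>A. \<Sum>b\<in>B. f a b \<omega>) = (\<Sum>a\<in>A. \<Sum>b\<in>B. expectation (f a b))"
  using assms by (simp add: expectation_sum_polynomial polynomial_sum)

end

locale gaussian_regression_data = prob_space +
  fixes d n :: nat and lam :: "nat \<Rightarrow> real"
    and x :: "nat \<Rightarrow> nat \<Rightarrow> 'a \<Rightarrow> real" and w :: "nat \<Rightarrow> 'a \<Rightarrow> real"
  assumes n_pos: "n \<ge> 1"
    and lam_nonneg: "\<And>k. k < d \<Longrightarrow> lam k \<ge> 0"
    and indep_data: "indep_vars (\<lambda>_. borel) (case_sum (\<lambda>(i, k). x i k) w) (({..<n} \<times> {..<d}) <+> {..<d})"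
    and distr_x: "\<And>i k. i < n \<Longrightarrow> k < d \<Longrightarrow> distr M borel (x i k) = gauss (lam k)"
    and distr_w: "\<And>k. k < d \<Longrightarrow> distr M borel (w k) = gauss 1"
begin

abbreviation data_index :: "((nat \<times> nat) + nat) set" where
  "data_index \<equiv> ({..<n} \<times> {..<d}) <+> {..<d}"

abbreviation data :: "(nat \<times> nat) + nat \<Rightarrow> 'a \<Rightarrow> real" where
  "data \<equiv> case_sum (\<lambda>(i, k). x i k) w"

lemma Inl_in_data_index [simp]: "Inl (i, k) \<in> data_index \<longleftrightarrow> i < n \<and> k < d"
  and Inr_in_data_index [simp]: "Inr k \<in> data_index \<longleftrightarrow> k < d"
  by auto

lemma data_gauss_distributed:
  assumes "v \<in> data_index"
  obtains s where "s \<ge> 0" "distr M borel (data v) = gauss s" "random_variable borel (data v)"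
proof -
  have "random_variable borel (data v)"
    using indep_data assms unfolding indep_vars_def by blast
  moreover have "\<exists>s\<ge>0. distr M borel (data v) = gauss s"
  proof (cases v)
    case (Inl ik)
    then show ?thesis using assms distr_x lam_nonneg by (cases ik) auto
  next
    case (Inr k)
    then show ?thesis using assms distr_w[of k] by (intro exI[of _ 1]) auto
  qed
  ultimately show ?thesis using that by blast
qed

sublocale indep_vars_vanishing_odd_moments M data_index data
proof
  show "finite data_index" by simp
  show "indep_vars (\<lambda>_. borel) data data_index" by (rule indep_data)
next
  fix v k assume v: "v \<in> data_index"
  then obtain s where s: "s \<ge> 0" "distr M borel (data v) = gauss s" "random_variable borel (data v)"
    by (rule data_gauss_distributed)
  show "integrable M (\<lambda>\<omega>. data v \<omega> ^ k)"
    using s by (intro integrable_power_gauss_distributed)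
  show "expectation (\<lambda>\<omega>. data v \<omega> ^ k) = 0" if "odd k"
    using expectation_power_gauss_distributed[OF s(3,2,1)] integral_odd_power_gauss[OF s(1) that]
    by (rule trans)
qed

lemma
  assumes "i < n" "k < d"
  shows expectation_x_power2: "expectation (\<lambda>\<omega>. x i k \<omega> ^ 2) = lam k"
    and expectation_x_power4: "expectation (\<lambda>\<omega>. x i k \<omega> ^ 4) = 3 * (lam k)\<^sup>2"
proof -
  have "random_variable borel (x i k)"
    using indep_data assms unfolding indep_vars_def by force
  note moment = expectation_power_gauss_distributed[OF this distr_x[OF assms] lam_nonneg[OF assms(2)]]
  show "expectation (\<lambda>\<omega>. x i k \<omega> ^ 2) = lam k"
    using moment[of 2] integral_power2_gauss[OF lam_nonneg[OF assms(2)]] by (rule trans)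
  show "expectation (\<lambda>\<omega>. x i k \<omega> ^ 4) = 3 * (lam k)\<^sup>2"
    using moment[of 4] integral_power4_gauss[OF lam_nonneg[OF assms(2)]] by (rule trans)
qed

lemma expectation_w_power2:
  assumes "k < d"
  shows "expectation (\<lambda>\<omega>. w k \<omega> ^ 2) = 1"
proof -
  have "random_variable borel (w k)"
    using indep_data assms unfolding indep_vars_def by force
  from expectation_power_gauss_distributed[OF this distr_w[OF assms], of 2] integral_power2_gauss[of 1]
  show ?thesis by simp
qed

lemma parity_poly_x: "finite S \<Longrightarrow> i < n \<Longrightarrow> k < d \<Longrightarrow> parity_poly S (Inl (i, k) \<in> S) (x i k)"
  using parity_poly_var[of S "Inl (i, k)"] by simp

lemma parity_poly_w: "finite S \<Longrightarrow> k < d \<Longrightarrow> parity_poly S (Inr k \<in> S) (w k)"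
  using parity_poly_var[of S "Inr k"] by simp

lemma parity_poly_label:
  assumes "finite S" "i < n" "\<And>k. k < d \<Longrightarrow> ((Inr k \<in> S) \<noteq> (Inl (i, k) \<in> S)) = p"
  shows "parity_poly S p (label d x w i)"
proof -
  have "parity_poly S p (\<lambda>\<omega>. w k \<omega> * x i k \<omega>)" if "k < d" for k
    using parity_poly_mult[OF parity_poly_w[OF assms(1) that] parity_poly_x[OF assms(1,2) that]]
      assms(3)[OF that] by simp
  then have "parity_poly S p (\<lambda>\<omega>. \<Sum>k<d. w k \<omega> * x i k \<omega>)"
    by (intro parity_poly_sum) auto
  then show ?thesis
    by (simp add: label_def[abs_def])
qed

lemma parity_poly_zvec:
  assumes "finite S" "i < n" "c \<le> d"
    and "c < d \<Longrightarrow> p = (Inl (i, c) \<in> S)"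
    and "\<And>k. c = d \<Longrightarrow> k < d \<Longrightarrow> ((Inr k \<in> S) \<noteq> (Inl (i, k) \<in> S)) = p"
  shows "parity_poly S p (\<lambda>\<omega>. zvec d x w i \<omega> c)"
proof (cases "c < d")
  case True
  then show ?thesis using assms parity_poly_x[of S i c] by (simp add: zvec_def)
next
  case False
  then show ?thesis using assms parity_poly_label[of S i p] by (simp add: zvec_def)
qed

lemma parity_poly_Cmat:
  assumes "\<And>i c. i < n \<Longrightarrow> c \<le> d \<Longrightarrow> parity_poly S (q c) (\<lambda>\<omega>. zvec d x w i \<omega> c)"
    and "a \<le> d" "b \<le> d"
  shows "parity_poly S (q a \<noteq> q b) (\<lambda>\<omega>. Cmat d n x w \<omega> a b)"
proof -
  have "parity_poly S (q a \<noteq> q b) (\<lambda>\<omega>. \<Sum>i<n. zvec d x w i \<omega> a * zvec d x w i \<omega> b)"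
    using assms by (intro parity_poly_sum parity_poly_mult) auto
  from parity_poly_mult[OF parity_poly_const[of S "1 / real n"] this] show ?thesis
    unfolding Cmat_def by simp
qed

lemma polynomial_x: "i < n \<Longrightarrow> k < d \<Longrightarrow> polynomial (x i k)"
  using parity_poly_x[of "{}"] by simp

lemma polynomial_w: "k < d \<Longrightarrow> polynomial (w k)"
  using parity_poly_w[of "{}"] by simp

lemma polynomial_label: "i < n \<Longrightarrow> polynomial (label d x w i)"
  by (rule parity_poly_label) auto

lemma polynomial_Cmat: "a \<le> d \<Longrightarrow> b \<le> d \<Longrightarrow> polynomial (\<lambda>\<omega>. Cmat d n x w \<omega> a b)"
  using parity_poly_Cmat[where q = "\<lambda>_. False"] parity_poly_zvec[of "{}"] by simp

lemma parity_poly_Cmat_weights: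
  "a \<le> d \<Longrightarrow> b \<le> d \<Longrightarrow> parity_poly (Inr ` {..<d}) ((a = d) \<noteq> (b = d)) (\<lambda>\<omega>. Cmat d n x w \<omega> a b)"
  by (intro parity_poly_Cmat parity_poly_zvec) auto

definition coordinate_vars :: "nat \<Rightarrow> ((nat \<times> nat) + nat) set" where
  "coordinate_vars c = insert (Inr c) ((\<lambda>i. Inl (i, c)) ` {..<n})"

lemma coordinate_vars_subset: "c < d \<Longrightarrow> coordinate_vars c \<subseteq> data_index"
  by (auto simp: coordinate_vars_def)

lemma parity_poly_Cmat_coordinate:
  "c < d \<Longrightarrow> a \<le> d \<Longrightarrow> b \<le> d
    \<Longrightarrow> parity_poly (coordinate_vars c) ((a = c) \<noteq> (b = c)) (\<lambda>\<omega>. Cmat d n x w \<omega> a b)"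
  by (intro parity_poly_Cmat parity_poly_zvec) (auto simp: coordinate_vars_def)

lemma Cmat_sym: "Cmat d n x w \<omega> a b = Cmat d n x w \<omega> b a"
  by (simp add: Cmat_def mult.commute)

lemma Cmat_label_coordinate:
  "j < d \<Longrightarrow> Cmat d n x w \<omega> d j = 1 / real n * (\<Sum>i<n. label d x w i \<omega> * x i j \<omega>)"
  by (simp add: Cmat_def zvec_def)

lemma expectation_mult_Cmat_eq_0:
  assumes "j < d" "a \<le> d" "b \<le> d" "\<not> ((a = j \<and> b = d) \<or> (a = d \<and> b = j))"
  shows "expectation (\<lambda>\<omega>. w j \<omega> * Cmat d n x w \<omega> a b) = 0"
    and "expectation (\<lambda>\<omega>. Cmat d n x w \<omega> d j * Cmat d n x w \<omega> a b) = 0"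
proof -
  obtain S q where S: "S \<subseteq> data_index" and "parity_poly S q (w j)"
    and "parity_poly S q (\<lambda>\<omega>. Cmat d n x w \<omega> d j)" "parity_poly S (\<not> q) (\<lambda>\<omega>. Cmat d n x w \<omega> a b)"
    (* If a and b are both d or both not, C_ab is even in the weights, in which w_j and C_dj are odd;
       otherwise C_ab is odd in the variables of its data coordinate c, in which w_j and C_dj are even. *)
  proof (cases "(a = d) = (b = d)")
    case True
    then show ?thesis
      using that[of "Inr ` {..<d}" True] assms
        parity_poly_w[of "Inr ` {..<d}" j] parity_poly_Cmat_weights[of d j] parity_poly_Cmat_weights[of a b]
      by auto
  next
    case False
    define c where "c = (if a = d then b else a)"
    have c: "c < d" "c \<noteq> j" "(a = c) \<noteq> (b = c)"
      using False assms unfolding c_def by auto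
    have "Inr j \<notin> coordinate_vars c"
      using c by (auto simp: coordinate_vars_def)
    then show ?thesis
      using that[of "coordinate_vars c" False] c assms coordinate_vars_subset[of c]
        parity_poly_w[of "coordinate_vars c" j] parity_poly_Cmat_coordinate[of c d j]
        parity_poly_Cmat_coordinate[of c a b]
      by (auto simp: coordinate_vars_def)
  qed
  then have "parity_poly S True (\<lambda>\<omega>. w j \<omega> * Cmat d n x w \<omega> a b)"
    and "parity_poly S True (\<lambda>\<omega>. Cmat d n x w \<omega> d j * Cmat d n x w \<omega> a b)"
    using parity_poly_mult by fastforce+
  then show "expectation (\<lambda>\<omega>. w j \<omega> * Cmat d n x w \<omega> a b) = 0"
    and "expectation (\<lambda>\<omega>. Cmat d n x w \<omega> d j * Cmat d n x w \<omega> a b) = 0"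
    using S by (simp_all add: expectation_odd_parity_poly_eq_0)
qed

lemma expectation_w_label_x:
  assumes "i < n" "j < d"
  shows "expectation (\<lambda>\<omega>. w j \<omega> * (label d x w i \<omega> * x i j \<omega>)) = lam j"
proof -
  have summand: "expectation (\<lambda>\<omega>. w j \<omega> * w l \<omega> * x i l \<omega> * x i j \<omega>) = (if l = j then lam j else 0)"
    if "l < d" for l
  proof (cases "l = j")
    case True
    have "(\<lambda>\<omega>. w j \<omega> * w l \<omega> * x i l \<omega> * x i j \<omega>) = (\<lambda>\<omega>. \<Prod>v\<in>{Inr j, Inl (i, j)}. data v \<omega> ^ 2)"
      using True by (simp add: power2_eq_square ac_simps)
    then show ?thesis
      using True assms expectation_prod_power[of "{Inr j, Inl (i, j)}" "\<lambda>_. 2"]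
      by (simp add: expectation_w_power2 expectation_x_power2)
  next
    case False
    have "parity_poly {Inr l} True (\<lambda>\<omega>. w j \<omega> * w l \<omega> * x i l \<omega> * x i j \<omega>)"
      using False assms that by - (rule parity_poly_mult_eq parity_poly_w parity_poly_x | simp)+
    then show ?thesis
      using False that expectation_odd_parity_poly_eq_0[of "{Inr l}"] by simp
  qed
  have "expectation (\<lambda>\<omega>. w j \<omega> * (label d x w i \<omega> * x i j \<omega>))
      = expectation (\<lambda>\<omega>. \<Sum>l<d. w j \<omega> * w l \<omega> * x i l \<omega> * x i j \<omega>)"
    by (simp add: label_def sum_distrib_left sum_distrib_right ac_simps)
  also have "\<dots> = (\<Sum>l<d. expectation (\<lambda>\<omega>. w j \<omega> * w l \<omega> * x i l \<omega> * x i j \<omega>))"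
    using assms by (intro expectation_sum_polynomial polynomial_mult polynomial_w polynomial_x) auto
  also have "\<dots> = lam j"
    using assms by (simp add: summand)
  finally show ?thesis .
qed

lemma expectation_w_mult_Cmat:
  assumes "j < d"
  shows "expectation (\<lambda>\<omega>. w j \<omega> * Cmat d n x w \<omega> d j) = lam j"
proof -
  have "expectation (\<lambda>\<omega>. w j \<omega> * Cmat d n x w \<omega> d j)
      = expectation (\<lambda>\<omega>. 1 / real n * (\<Sum>i<n. w j \<omega> * (label d x w i \<omega> * x i j \<omega>)))"
    using assms by (simp add: Cmat_label_coordinate sum_distrib_left)
  also have "\<dots> = 1 / real n * (\<Sum>i<n. expectation (\<lambda>\<omega>. w j \<omega> * (label d x w i \<omega> * x i j \<omega>)))"
    unfolding integral_mult_right_zero using assms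
    by (subst expectation_sum_polynomial) (auto intro!: polynomial_mult polynomial_w polynomial_x polynomial_label)
  also have "\<dots> = lam j"
    using assms n_pos by (simp add: expectation_w_label_x)
  finally show ?thesis .
qed

lemma expectation_label_summands_product:
  assumes "i < n" "i' < n" "j < d" "l < d" "m < d"
  shows "expectation (\<lambda>\<omega>. w l \<omega> * x i l \<omega> * x i j \<omega> * (w m \<omega> * x i' m \<omega> * x i' j \<omega>)) =
    (if l = m then
       if i = i' then (if l = j then 3 * (lam j)\<^sup>2 else lam l * lam j)
       else if l = j then (lam j)\<^sup>2 else 0
     else 0)"
    (is "expectation ?T = _")
proof -
  consider "l \<noteq> m" | "l = m" "i \<noteq> i'" "l \<noteq> j" | "l = m" "i = i'" "l = j"
    | "l = m" "i = i'" "l \<noteq> j" | "l = m" "i \<noteq> i'" "l = j"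
    by blast
  then show ?thesis
  proof cases
    case 1
    have "parity_poly {Inr l} True ?T"
      using 1 assms by - (rule parity_poly_mult_eq parity_poly_w parity_poly_x | simp)+
    then show ?thesis
      using 1 assms expectation_odd_parity_poly_eq_0[of "{Inr l}"] by simp
  next
    case 2
    have "parity_poly {Inl (i, l)} True ?T"
      using 2 assms by - (rule parity_poly_mult_eq parity_poly_w parity_poly_x | simp)+
    then show ?thesis
      using 2 assms expectation_odd_parity_poly_eq_0[of "{Inl (i, l)}"] by simp
  next
    case 3
    let ?k = "\<lambda>v. if v = Inr j then 2 else 4"
    have "?T = (\<lambda>\<omega>. \<Prod>v\<in>{Inr j, Inl (i, j)}. data v \<omega> ^ ?k v)"
      using 3 by (simp add: eval_nat_numeral ac_simps)
    then show ?thesis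
      using 3 assms expectation_prod_power[of "{Inr j, Inl (i, j)}" ?k]
      by (simp add: expectation_w_power2 expectation_x_power4)
  next
    case 4
    have "?T = (\<lambda>\<omega>. \<Prod>v\<in>{Inr l, Inl (i, l), Inl (i, j)}. data v \<omega> ^ 2)"
      using 4 by (simp add: power2_eq_square ac_simps)
    then show ?thesis
      using 4 assms expectation_prod_power[of "{Inr l, Inl (i, l), Inl (i, j)}" "\<lambda>_. 2"]
      by (simp add: expectation_w_power2 expectation_x_power2 mult.commute)
  next
    case 5
    have "?T = (\<lambda>\<omega>. \<Prod>v\<in>{Inr j, Inl (i, j), Inl (i', j)}. data v \<omega> ^ 2)"
      using 5 by (simp add: power2_eq_square ac_simps)
    then show ?thesis
      using 5 assms expectation_prod_power[of "{Inr j, Inl (i, j), Inl (i', j)}" "\<lambda>_. 2"]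
      by (simp add: expectation_w_power2 expectation_x_power2 flip: power2_eq_square)
  qed
qed

lemma expectation_label_x_mult_label_x:
  assumes "i < n" "i' < n" "j < d"
  shows "expectation (\<lambda>\<omega>. label d x w i \<omega> * x i j \<omega> * (label d x w i' \<omega> * x i' j \<omega>)) =
    (if i = i' then lam j * (\<Sum>k<d. lam k) + 2 * (lam j)\<^sup>2 else (lam j)\<^sup>2)"
proof -
  let ?T = "\<lambda>l m \<omega>. w l \<omega> * x i l \<omega> * x i j \<omega> * (w m \<omega> * x i' m \<omega> * x i' j \<omega>)"
  have "expectation (\<lambda>\<omega>. label d x w i \<omega> * x i j \<omega> * (label d x w i' \<omega> * x i' j \<omega>))
      = expectation (\<lambda>\<omega>. \<Sum>m<d. \<Sum>l<d. ?T l m \<omega>)"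
    by (simp add: label_def sum_distrib_right sum_distrib_left)
  also have "\<dots> = (\<Sum>m<d. \<Sum>l<d. expectation (?T l m))"
    using assms by (intro expectation_double_sum_polynomial polynomial_mult polynomial_w polynomial_x) auto
  also have "\<dots> = (\<Sum>l<d. if i = i' then (if l = j then 3 * (lam j)\<^sup>2 else lam l * lam j)
                            else if l = j then (lam j)\<^sup>2 else 0)"
    using assms by (simp add: expectation_label_summands_product)
  also have "\<dots> = (if i = i' then lam j * (\<Sum>k<d. lam k) + 2 * (lam j)\<^sup>2 else (lam j)\<^sup>2)"
  proof -
    have "(\<Sum>l<d. if l = j then 3 * (lam j)\<^sup>2 else lam l * lam j)
        = (\<Sum>l<d. lam j * lam l + (if l = j then 2 * (lam j)\<^sup>2 else 0))"
      by (rule sum.cong) (auto simp: power2_eq_square)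
    then show ?thesis
      using assms by (simp add: sum.distrib flip: sum_distrib_left)
  qed
  finally show ?thesis .
qed

lemma expectation_Cmat_square:
  assumes "j < d"
  shows "expectation (\<lambda>\<omega>. Cmat d n x w \<omega> d j * Cmat d n x w \<omega> d j)
    = lam j * ((real n + 1) * lam j + (\<Sum>k<d. lam k)) / real n"
proof -
  let ?S = "\<Sum>k<d. lam k"
  let ?Y = "\<lambda>i \<omega>. label d x w i \<omega> * x i j \<omega>"
  have "expectation (\<lambda>\<omega>. Cmat d n x w \<omega> d j * Cmat d n x w \<omega> d j)
      = 1 / real n * (1 / real n) * expectation (\<lambda>\<omega>. \<Sum>i<n. \<Sum>i'<n. ?Y i \<omega> * ?Y i' \<omega>)"
    using assms by (simp add: Cmat_label_coordinate sum_product)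
  also have "\<dots> = 1 / real n * (1 / real n) * (\<Sum>i<n. \<Sum>i'<n. expectation (\<lambda>\<omega>. ?Y i \<omega> * ?Y i' \<omega>))"
    using assms by (subst expectation_double_sum_polynomial) (auto intro!: polynomial_mult polynomial_label polynomial_x)
  also have "\<dots> = 1 / real n * (1 / real n) * (\<Sum>i<n. lam j * ?S + 2 * (lam j)\<^sup>2 + (real n - 1) * (lam j)\<^sup>2)"
    using assms by (simp add: expectation_label_x_mult_label_x sum_lessThan_if_eq)
  also have "\<dots> = lam j * ((real n + 1) * lam j + ?S) / real n"
    using n_pos by (simp add: field_simps power2_eq_square)
  finally show ?thesis .
qed

definition optimal_scale :: "nat \<Rightarrow> real" where
  "optimal_scale j = 1 / ((real n + 1) / real n * lam j + (1 / real n) * (\<Sum>k<d. lam k))"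

lemma lam_eq_optimal_scale_mult:
  assumes "j < d"
  shows "lam j = optimal_scale j * (lam j * ((real n + 1) * lam j + (\<Sum>k<d. lam k)) / real n)"
proof (cases "lam j = 0")
  case False
  have "(\<Sum>k<d. lam k) \<ge> 0"
    using lam_nonneg by (intro sum_nonneg) simp
  moreover have "lam j > 0"
    using False lam_nonneg[OF assms] by simp
  ultimately have pos: "(real n + 1) * lam j + (\<Sum>k<d. lam k) > 0"
    by (simp add: add_pos_nonneg)
  have "optimal_scale j = real n / ((real n + 1) * lam j + (\<Sum>k<d. lam k))"
    using n_pos by (simp add: optimal_scale_def field_simps)
  then show ?thesis
    using n_pos pos by simp
qed simp

definition residual :: "nat \<Rightarrow> 'a \<Rightarrow> real" where
  "residual j \<omega> = w j \<omega> - optimal_scale j * Cmat d n x w \<omega> d j"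

lemma polynomial_residual: "j < d \<Longrightarrow> polynomial (residual j)"
  unfolding residual_def[abs_def]
  by (intro parity_poly_diff polynomial_mult polynomial_w polynomial_Cmat parity_poly_const) auto

lemma expectation_residual_mult_Cmat:
  assumes "j < d" "a \<le> d" "b \<le> d"
  shows "expectation (\<lambda>\<omega>. residual j \<omega> * Cmat d n x w \<omega> a b) = 0"
proof -
  have "expectation (\<lambda>\<omega>. residual j \<omega> * Cmat d n x w \<omega> a b)
      = expectation (\<lambda>\<omega>. w j \<omega> * Cmat d n x w \<omega> a b)
        - optimal_scale j * expectation (\<lambda>\<omega>. Cmat d n x w \<omega> d j * Cmat d n x w \<omega> a b)"
    unfolding residual_def left_diff_distrib mult.assoc using assms
    by (subst Bochner_Integration.integral_diff)
      (auto intro!: integrable_polynomial polynomial_mult polynomial_w polynomial_Cmat parity_poly_const)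
  also have "\<dots> = 0"
  proof (cases "(a = j \<and> b = d) \<or> (a = d \<and> b = j)")
    case True
    then have "Cmat d n x w \<omega> a b = Cmat d n x w \<omega> d j" for \<omega>
      using Cmat_sym by auto
    then show ?thesis
      using assms expectation_w_mult_Cmat expectation_Cmat_square lam_eq_optimal_scale_mult by simp
  next
    case False
    then show ?thesis
      using assms expectation_mult_Cmat_eq_0 by simp
  qed
  finally show ?thesis .
qed

lemma polynomial_frob_Cmat: "polynomial (\<lambda>\<omega>. frob d (Cmat d n x w \<omega>) Y)"
  unfolding frob_def by (intro polynomial_sum polynomial_mult polynomial_Cmat parity_poly_const) auto

lemma expectation_residual_mult_frob:
  assumes "j < d"
  shows "expectation (\<lambda>\<omega>. residual j \<omega> * frob d (Cmat d n x w \<omega>) Y) = 0"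
proof -
  have "expectation (\<lambda>\<omega>. residual j \<omega> * frob d (Cmat d n x w \<omega>) Y)
      = expectation (\<lambda>\<omega>. \<Sum>a\<le>d. \<Sum>b\<le>d. Y a b * (residual j \<omega> * Cmat d n x w \<omega> a b))"
    by (simp add: frob_def sum_distrib_left ac_simps)
  also have "\<dots> = (\<Sum>a\<le>d. \<Sum>b\<le>d. Y a b * expectation (\<lambda>\<omega>. residual j \<omega> * Cmat d n x w \<omega> a b))"
    using polynomial_residual[OF assms] by (subst expectation_double_sum_polynomial)
      (auto intro!: polynomial_mult polynomial_Cmat parity_poly_const)
  also have "\<dots> = 0"
    using assms by (simp add: expectation_residual_mult_Cmat)
  finally show ?thesis .
qed

lemma fj_optimal_scale_le:
  assumes "j < d"
  shows "fj M d n x w j (\<lambda>r c. - optimal_scale j * Emat d j r c) \<le> fj M d n x w j X"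
proof -
  define Xj where "Xj = (\<lambda>r c. - optimal_scale j * Emat d j r c)"
  define D where "D \<omega> = frob d (Cmat d n x w \<omega>) (\<lambda>a b. X a b - Xj a b)" for \<omega>
  have r: "polynomial (residual j)"
    using assms by (rule polynomial_residual)
  have D: "polynomial D"
    unfolding D_def by (rule polynomial_frob_Cmat)
  have frob_Xj: "frob d (Cmat d n x w \<omega>) Xj = - optimal_scale j * Cmat d n x w \<omega> d j" for \<omega>
    unfolding Xj_def using assms by (subst frob_scaled_Emat) simp_all
  then have "fj M d n x w j Xj = expectation (\<lambda>\<omega>. (residual j \<omega>)\<^sup>2)"
    by (simp add: fj_def residual_def)
  also have "\<dots> \<le> expectation (\<lambda>\<omega>. (residual j \<omega> + D \<omega>)\<^sup>2)"
  proof (rule expectation_square_le_add_orthogonal)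
    show "expectation (\<lambda>\<omega>. residual j \<omega> * D \<omega>) = 0"
      unfolding D_def by (rule expectation_residual_mult_frob[OF assms])
  qed (use r D in \<open>auto simp: power2_eq_square intro!: integrable_polynomial polynomial_mult\<close>)
  also have "\<dots> = fj M d n x w j X"
    by (simp add: fj_def residual_def D_def frob_diff_right frob_Xj add.commute)
  finally show ?thesis
    unfolding Xj_def .
qed

end

theorem lemma3:
  fixes M :: "'a measure" and d n j :: nat and lam :: "nat \<Rightarrow> real"
    and x :: "nat \<Rightarrow> nat \<Rightarrow> 'a \<Rightarrow> real" and w :: "nat \<Rightarrow> 'a \<Rightarrow> real"
  assumes "prob_space M"
    and "d \<ge> 1" and "n \<ge> 1"
    and "\<And>k. k < d \<Longrightarrow> lam k \<ge> 0"
    and "prob_space.indep_vars M (\<lambda>_. borel) (case_sum (\<lambda>(i, k). x i k) w)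
           (({..<n} \<times> {..<d}) <+> {..<d})"
    and "\<And>i k. i < n \<Longrightarrow> k < d \<Longrightarrow> distr M borel (x i k) = gauss (lam k)"
    and "\<And>k. k < d \<Longrightarrow> distr M borel (w k) = gauss 1"
    and "j < d"
  shows "\<forall>X. fj M d n x w j
           (\<lambda>r c. - (1 / ((real n + 1) / real n * lam j + (1 / real n) * (\<Sum>k<d. lam k)))
                   * Emat d j r c)
         \<le> fj M d n x w j X"
proof -
  interpret gaussian_regression_data M d n lam x w
    using assms by (simp add: gaussian_regression_data_def gaussian_regression_data_axioms_def)
  show ?thesis
    using fj_optimal_scale_le[OF assms(8)] by (simp add: optimal_scale_def)
qed

end
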